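(* Let $\ell$ be a label, $A,B$ types and $\rho_{11},\rho_{12},\rho_{21},\rho_{22}$ rows such that all concatenations below are defined. If $\rho_{11}\odot(\ell{:}A;\cdot)\odot\rho_{12} \simeq \rho_{21}\odot(\ell{:}B;\cdot)\odot\rho_{22}$ and $\ell \notin \mathit{dom}(\rho_{11})\cup\mathit{dom}(\rho_{21})$, then $A \simeq B$ and $\rho_{11}\odot\rho_{12} \simeq \rho_{21}\odot\rho_{22}$.
   Context: Types and rows share one grammar: $A,B,C,\rho ::= X \mid \alpha \mid \star \mid \iota \mid A\to B \mid \forall X{:}K.\,A \mid [\rho] \mid \langle\rho\rangle \mid \cdot \mid \ell{:}A;\rho$, where $X$ ranges over type variables (bound by $\forall$), $\alpha$ over type names, $\star$ is the dynamic type (also serving as the dynamic row), $\iota$ over base types, $[\rho]$ and $\langle\rho\rangle$ are record and variant types, $\cdot$ is the empty row, $\ell$ ranges over labels, and $K\in\{\mathsf T,\mathsf R\}$ is a kind. Types are identified up to renaming of bound variables; $\mathit{ftv}(A)$ is the set of free type variables. Row matching $\rho \triangleright_\ell A,\rho'$ is defined by: $(\ell{:}A;\rho)\triangleright_\ell A,\rho$; if $\ell'\neq\ell$ and $\rho\triangleright_\ell A,\rho'$ then $(\ell'{:}B;\rho)\triangleright_\ell A,(\ell'{:}B;\rho')$; and $\star\triangleright_\ell \star,\star$. $\mathbf{QPoly}(A)$ holds iff $A$ is not of the form $\forall X{:}K.\,B$ and $\star$ occurs in $A$. Row concatenation $\rho_1\odot\rho_2$ is defined only when $\rho_1=\ell_1{:}A_1;\dots;\ell_n{:}A_n;\cdot$,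 and then equals $\ell_1{:}A_1;\dots;\ell_n{:}A_n;\rho_2$. $\mathit{dom}(\rho)$ is the set of labels in the top-level label prefix of $\rho$. Consistency $\simeq$ is defined inductively: $A\simeq A$; $\star\simeq A$; $A\simeq\star$; $A_1\to A_2\simeq B_1\to B_2$ if $A_1\simeq B_1$ and $A_2\simeq B_2$; $\forall X{:}K.A\simeq\forall X{:}K.B$ if $A\simeq B$; $\forall X{:}K.A\simeq B$ if $\mathbf{QPoly}(B)$, $X\notin\mathit{ftv}(B)$ and $A\simeq B$; $A\simeq\forall X{:}K.B$ if $\mathbf{QPoly}(A)$, $X\notin\mathit{ftv}(A)$ and $A\simeq B$; $[\rho_1]\simeq[\rho_2]$ and $\langle\rho_1\rangle\simeq\langle\rho_2\rangle$ if $\rho_1\simeq\rho_2$; $\ell{:}A;\rho_1\simeq B$ if $B\triangleright_\ell B',\rho_2$, $A\simeq B'$ and $\rho_1\simeq\rho_2$; $A\simeq \ell{:}B;\rho_2$ if $A\triangleright_\ell A',\rho_1$, $A'\simeq B$ and $\rho_1\simeq\rho_2$. *)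

theory Defs
  imports Main
begin

type_synonym label = string

datatype kind = KT | KR

text \<open>Types and rows share one grammar. Bound type variables X use de Bruijn indices
  (so types are identified up to renaming of bound variables); type names alpha and
  base types iota are represented by natural numbers.\<close>
datatype ty =
    TVar nat
  | TName nat
  | Dyn
  | Base nat
  | Arr ty ty
  | All kind ty
  | Rec ty
  | Var ty
  | REmpty
  | RCons label ty ty

fun shift :: "nat \<Rightarrow> ty \<Rightarrow> ty" where
  "shift c (TVar i) = (if i < c then TVar i else TVar (Suc i))"
| "shift c (TName a) = TName a"
| "shift c Dyn = Dyn"
| "shift c (Base b) = Base b"
| "shift c (Arr A B) = Arr (shift c A) (shift c B)"
| "shift c (All K A) = All K (shift (Suc c) A)"
| "shift c (Rec r) = Rec (shift c r)"
| "shift c (Var r) = Var (shift c r)"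
| "shift c REmpty = REmpty"
| "shift c (RCons l A r) = RCons l (shift c A) (shift c r)"

fun occurs_dyn :: "ty \<Rightarrow> bool" where
  "occurs_dyn (TVar i) = False"
| "occurs_dyn (TName a) = False"
| "occurs_dyn Dyn = True"
| "occurs_dyn (Base b) = False"
| "occurs_dyn (Arr A B) = (occurs_dyn A \<or> occurs_dyn B)"
| "occurs_dyn (All K A) = occurs_dyn A"
| "occurs_dyn (Rec r) = occurs_dyn r"
| "occurs_dyn (Var r) = occurs_dyn r"
| "occurs_dyn REmpty = False"
| "occurs_dyn (RCons l A r) = (occurs_dyn A \<or> occurs_dyn r)"

definition QPoly :: "ty \<Rightarrow> bool" where
  "QPoly A \<longleftrightarrow> (\<nexists>K B. A = All K B) \<and> occurs_dyn A"

inductive rmatch :: "ty \<Rightarrow> label \<Rightarrow> ty \<Rightarrow> ty \<Rightarrow> bool" where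
  rm_head: "rmatch (RCons l A r) l A r"
| rm_tail: "l' \<noteq> l \<Longrightarrow> rmatch r l A r' \<Longrightarrow> rmatch (RCons l' B r) l A (RCons l' B r')"
| rm_dyn: "rmatch Dyn l Dyn Dyn"

text \<open>Consistency. The side condition X not free in B for a binder is expressed in
  de Bruijn form: the unbound side is shifted past the new binder.\<close>
inductive consistent :: "ty \<Rightarrow> ty \<Rightarrow> bool" (infix "\<simeq>" 50) where
  c_refl: "A \<simeq> A"
| c_dynL: "Dyn \<simeq> A"
| c_dynR: "A \<simeq> Dyn"
| c_arr: "A1 \<simeq> B1 \<Longrightarrow> A2 \<simeq> B2 \<Longrightarrow> Arr A1 A2 \<simeq> Arr B1 B2"
| c_all: "A \<simeq> B \<Longrightarrow> All K A \<simeq> All K B"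
| c_allL: "QPoly B \<Longrightarrow> A \<simeq> shift 0 B \<Longrightarrow> All K A \<simeq> B"
| c_allR: "QPoly A \<Longrightarrow> shift 0 A \<simeq> B \<Longrightarrow> A \<simeq> All K B"
| c_rec: "r1 \<simeq> r2 \<Longrightarrow> Rec r1 \<simeq> Rec r2"
| c_var: "r1 \<simeq> r2 \<Longrightarrow> Var r1 \<simeq> Var r2"
| c_rconsL: "rmatch B l B' r2 \<Longrightarrow> A \<simeq> B' \<Longrightarrow> r1 \<simeq> r2 \<Longrightarrow> RCons l A r1 \<simeq> B"
| c_rconsR: "rmatch A l A' r1 \<Longrightarrow> A' \<simeq> B \<Longrightarrow> r1 \<simeq> r2 \<Longrightarrow> A \<simeq> RCons l B r2"

fun closed_row :: "ty \<Rightarrow> bool" where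
  "closed_row REmpty = True"
| "closed_row (RCons l A r) = closed_row r"
| "closed_row _ = False"

text \<open>Row concatenation rho1 (.) rho2; only meaningful when closed_row rho1.\<close>
fun rconcat :: "ty \<Rightarrow> ty \<Rightarrow> ty" (infixr "\<odot>" 65) where
  "rconcat REmpty r2 = r2"
| "rconcat (RCons l A r) r2 = RCons l A (rconcat r r2)"
| "rconcat r r2 = undefined"

fun rdom :: "ty \<Rightarrow> label set" where
  "rdom (RCons l A r) = insert l (rdom r)"
| "rdom _ = {}"

end

theory Submission
  imports Defs
begin

text \<open>Matching a label \<open>l\<close> on both sides of a consistency judgement yields consistent
  field types and consistent residual rows. This is proved by induction on the consistency
  derivation, using that row matching is deterministic and that matches at distinct labels
  commute. Since \<open>l \<notin> dom(\<rho>\<^sub>1\<^sub>1)\<close>, the row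
  \<open>\<rho>\<^sub>1\<^sub>1 \<odot> (l:A; \<cdot>) \<odot> \<rho>\<^sub>1\<^sub>2\<close> matches \<open>l\<close> with field \<open>A\<close> and residue
  \<open>\<rho>\<^sub>1\<^sub>1 \<odot> \<rho>\<^sub>1\<^sub>2\<close>, and likewise on the right.\<close>

lemma rmatch_deterministic:
  "rmatch r l A r' \<Longrightarrow> rmatch r l B s' \<Longrightarrow> A = B \<and> r' = s'"
proof (induction arbitrary: B s' rule: rmatch.induct)
  case (rm_tail l' l r A r' C)
  from rm_tail.prems rm_tail.hyps show ?case
    by (cases rule: rmatch.cases) (auto dest: rm_tail.IH)
qed (auto elim: rmatch.cases)

lemma rmatch_commute:
  assumes "rmatch r k C r\<^sub>k" and "rmatch r l A r\<^sub>l" and "l \<noteq> k"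
  shows "\<exists>s. rmatch r\<^sub>k l A s \<and> rmatch r\<^sub>l k C s"
  using assms
proof (induction arbitrary: r\<^sub>l rule: rmatch.induct)
  case (rm_head k C r)
  then show ?case by (auto elim: rmatch.cases intro: rmatch.intros)
next
  case (rm_tail k' k r C r\<^sub>k D)
  from rm_tail.prems(1) show ?case
  proof (cases rule: rmatch.cases)
    case rm_head
    then show ?thesis using rm_tail.hyps by (auto intro: rmatch.intros)
  next
    case (rm_tail r\<^sub>l')
    with rm_tail.IH \<open>l \<noteq> k\<close> obtain s where "rmatch r\<^sub>k l A s" "rmatch r\<^sub>l' k C s"
      by blast
    with \<open>k' \<noteq> k\<close> \<open>k' \<noteq> l\<close> \<open>r\<^sub>l = RCons k' D r\<^sub>l'\<close> show ?thesis
      by (blast intro: rmatch.rm_tail)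
  qed
next
  case (rm_dyn k)
  then show ?case by (auto elim: rmatch.cases intro: rmatch.intros)
qed

lemma consistent_rmatch:
  "X \<simeq> Y \<Longrightarrow> rmatch X l A X' \<Longrightarrow> rmatch Y l B Y' \<Longrightarrow> A \<simeq> B \<and> X' \<simeq> Y'"
proof (induction arbitrary: A B X' Y' rule: consistent.induct)
  case (c_refl X)
  then show ?case using rmatch_deterministic consistent.c_refl by blast
next
  case (c_rconsL Y k B\<^sub>k s\<^sub>k A\<^sub>k r)
  show ?case
  proof (cases "k = l")
    case True
    with c_rconsL.prems(1) have "A = A\<^sub>k" "X' = r" by (auto elim: rmatch.cases)
    moreover from True c_rconsL.hyps(1) have "rmatch Y l B\<^sub>k s\<^sub>k" by simp
    with c_rconsL.prems(2) have "B = B\<^sub>k" "Y' = s\<^sub>k" by (auto dest: rmatch_deterministic)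
    ultimately show ?thesis using c_rconsL.hyps by simp
  next
    case False
    with c_rconsL.prems(1) obtain r' where
      X': "X' = RCons k A\<^sub>k r'" and "rmatch r l A r'" by (auto elim: rmatch.cases)
    from rmatch_commute[OF c_rconsL.hyps(1) c_rconsL.prems(2)] False obtain s where
      "rmatch s\<^sub>k l B s" "rmatch Y' k B\<^sub>k s" by auto
    with c_rconsL.IH(2) \<open>rmatch r l A r'\<close> have "A \<simeq> B" "r' \<simeq> s" by auto
    with X' \<open>rmatch Y' k B\<^sub>k s\<close> c_rconsL.hyps(2) show ?thesis
      by (auto intro: consistent.c_rconsL)
  qed
next
  case (c_rconsR X k A\<^sub>k r\<^sub>k B\<^sub>k s)
  show ?case
  proof (cases "k = l")
    case True
    with c_rconsR.prems(2) have "B = B\<^sub>k" "Y' = s" by (auto elim: rmatch.cases)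
    moreover from True c_rconsR.hyps(1) have "rmatch X l A\<^sub>k r\<^sub>k" by simp
    with c_rconsR.prems(1) have "A = A\<^sub>k" "X' = r\<^sub>k" by (auto dest: rmatch_deterministic)
    ultimately show ?thesis using c_rconsR.hyps by simp
  next
    case False
    with c_rconsR.prems(2) obtain s' where
      Y': "Y' = RCons k B\<^sub>k s'" and "rmatch s l B s'" by (auto elim: rmatch.cases)
    from rmatch_commute[OF c_rconsR.hyps(1) c_rconsR.prems(1)] False obtain r where
      "rmatch r\<^sub>k l A r" "rmatch X' k A\<^sub>k r" by auto
    with c_rconsR.IH(2) \<open>rmatch s l B s'\<close> have "A \<simeq> B" "r \<simeq> s'" by auto
    with Y' \<open>rmatch X' k A\<^sub>k r\<close> c_rconsR.hyps(2) show ?thesis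
      by (auto intro: consistent.c_rconsR)
  qed
qed (auto elim: rmatch.cases intro: consistent.intros)

lemma rmatch_rconcat:
  "closed_row r \<Longrightarrow> l \<notin> rdom r \<Longrightarrow> rmatch (r \<odot> RCons l A s) l A (r \<odot> s)"
  by (induction r) (auto intro: rmatch.intros)

theorem mainTheorem9:
  fixes l :: label and A B r11 r12 r21 r22 :: ty
  assumes "closed_row r11" and "closed_row r21"
    and "r11 \<odot> RCons l A REmpty \<odot> r12 \<simeq> r21 \<odot> RCons l B REmpty \<odot> r22"
    and "l \<notin> rdom r11 \<union> rdom r21"
  shows "A \<simeq> B \<and> r11 \<odot> r12 \<simeq> r21 \<odot> r22"
proof -
  have "rmatch (r11 \<odot> RCons l A REmpty \<odot> r12) l A (r11 \<odot> r12)"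
    using rmatch_rconcat assms(1,4) by simp
  moreover have "rmatch (r21 \<odot> RCons l B REmpty \<odot> r22) l B (r21 \<odot> r22)"
    using rmatch_rconcat assms(2,4) by simp
  ultimately show ?thesis using consistent_rmatch assms(3) by blast
qed

end
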